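(* Let $T$ be a normal spanning tree of a connected graph $G$ with $n$ vertices and $m$ edges. Then $\mathcal{T}_G=\bigsqcup_{r\in\mathbb{I}^{m-n+1}}\mathcal{A}_T(r)$, where $\bigsqcup$ denotes disjoint union (each $\mathcal{A}_T(r)$ is nonempty and the sets $\mathcal{A}_T(r)$ are pairwise disjoint).
   Context: Graphs are finite, simple and undirected. $\mathbb{T}=\{z\in\mathbb{C}:|z|=1\}$, $\mathbb{I}=[0,2\pi)$. A $\mathbb{T}$-gain on $G$ is a map $\varphi$ from oriented edges to $\mathbb{T}$ with $\varphi(\overrightarrow{e_{ts}})=\varphi(\overrightarrow{e_{st}})^{-1}$; $\mathcal{T}_G$ is the set of all $\mathbb{T}$-gain graphs $(G,\varphi)$ on $G$. The gain of a directed cycle is the product of gains of its oriented edges. A rooted spanning tree $T$ with root $v_r$ induces the tree order ($v_x\le v_y$ iff $v_x$ is on the $T$-path from $v_r$ to $v_y$); $T$ is normal if adjacent vertices of $G$ are always comparable. The suitably oriented graph $\overrightarrow{G_T}$ orients each edge $e_{st}$ with $v_s\le v_t$ as $\overrightarrow{e_{st}}$ if $e_{st}\in E(T)$ and as $\overrightarrow{e_{ts}}$ otherwise; the $m-n+1$ fundamental cycles of $T$ become directed cycles $\overrightarrow{C_j(T)}$ in $\overrightarrow{G_T}$ (in a fixed order). For $r=(c_1,\dots,c_{m-n+1})\in\mathbb{I}^{m-n+1}$, $\mathcal{A}_T(r)=\{(G,\varphi)\in\mathcal{T}_G:\varphi(\overrightarrow{C_j(T)})=e^{ic_j},\ j=1,\dots,m-n+1\}$.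 *)

theory Defs
  imports Complex_Main
begin

definition simple_graph :: "'a set \<Rightarrow> 'a set set \<Rightarrow> bool" where
  "simple_graph V E \<longleftrightarrow> finite V \<and> (\<forall>e\<in>E. e \<subseteq> V \<and> card e = 2)"

definition is_path :: "'a set \<Rightarrow> 'a set set \<Rightarrow> 'a list \<Rightarrow> bool" where
  "is_path V F p \<longleftrightarrow> p \<noteq> [] \<and> distinct p \<and> set p \<subseteq> V \<and>
     (\<forall>i. Suc i < length p \<longrightarrow> {p ! i, p ! Suc i} \<in> F)"

definition is_cycle :: "'a set \<Rightarrow> 'a set set \<Rightarrow> 'a list \<Rightarrow> bool" where
  "is_cycle V F p \<longleftrightarrow> is_path V F p \<and> length p \<ge> 3 \<and> {last p, hd p} \<in> F"

definition connected_graph :: "'a set \<Rightarrow> 'a set set \<Rightarrow> bool" where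
  "connected_graph V F \<longleftrightarrow> V \<noteq> {} \<and>
     (\<forall>x\<in>V. \<forall>y\<in>V. \<exists>p. is_path V F p \<and> hd p = x \<and> last p = y)"

definition spanning_tree :: "'a set \<Rightarrow> 'a set set \<Rightarrow> 'a set set \<Rightarrow> bool" where
  "spanning_tree V E T \<longleftrightarrow> T \<subseteq> E \<and> connected_graph V T \<and> (\<nexists>p. is_cycle V T p)"

definition tree_path :: "'a set \<Rightarrow> 'a set set \<Rightarrow> 'a \<Rightarrow> 'a \<Rightarrow> 'a list" where
  "tree_path V T x y = (THE p. is_path V T p \<and> hd p = x \<and> last p = y)"

definition tree_le :: "'a set \<Rightarrow> 'a set set \<Rightarrow> 'a \<Rightarrow> 'a \<Rightarrow> 'a \<Rightarrow> bool" where
  "tree_le V T rt x y \<longleftrightarrow> x \<in> V \<and> y \<in> V \<and> x \<in> set (tree_path V T rt y)"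

definition normal_spanning_tree :: "'a set \<Rightarrow> 'a set set \<Rightarrow> 'a set set \<Rightarrow> 'a \<Rightarrow> bool" where
  "normal_spanning_tree V E T rt \<longleftrightarrow> spanning_tree V E T \<and> rt \<in> V \<and>
     (\<forall>x y. {x, y} \<in> E \<longrightarrow> tree_le V T rt x y \<or> tree_le V T rt y x)"

text \<open>The gain function is
  normalised to the value 1 on pairs that are not oriented edges, so that each
  gain corresponds to exactly one function.\<close>

definition gain_graphs :: "'a set \<Rightarrow> 'a set set \<Rightarrow> ('a \<Rightarrow> 'a \<Rightarrow> complex) set" where
  "gain_graphs V E = {\<phi>. (\<forall>u v. {u, v} \<in> E \<longrightarrow> cmod (\<phi> u v) = 1 \<and> \<phi> v u = inverse (\<phi> u v))
                       \<and> (\<forall>u v. {u, v} \<notin> E \<longrightarrow> \<phi> u v = 1)}"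

definition suitable_orientation :: "'a set \<Rightarrow> 'a set set \<Rightarrow> 'a set set \<Rightarrow> 'a \<Rightarrow> ('a \<times> 'a) set" where
  "suitable_orientation V E T rt =
     {(s, t). {s, t} \<in> T \<and> tree_le V T rt s t} \<union> {(t, s). {s, t} \<in> E - T \<and> tree_le V T rt s t}"

definition walk_gain :: "('a \<Rightarrow> 'a \<Rightarrow> complex) \<Rightarrow> 'a list \<Rightarrow> complex" where
  "walk_gain \<phi> p = (\<Prod>i<length p. \<phi> (p ! i) (p ! ((Suc i) mod length p)))"

text \<open>The fundamental cycle of a non-tree edge e = {s,t} with s \<le> t, as a directed
  cycle of \<open>G_T\<close>: the tree path s \<rightarrow> \<dots> \<rightarrow> t followed by the arc t \<rightarrow> s.\<close>

definition fundamental_cycle :: "'a set \<Rightarrow> 'a set set \<Rightarrow> 'a \<Rightarrow> 'a set \<Rightarrow> 'a list" where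
  "fundamental_cycle V T rt e =
     (let (s, t) = (SOME (s, t). e = {s, t} \<and> tree_le V T rt s t) in tree_path V T s t)"

text \<open>\<open>\<A>_T(r)\<close>, where the fundamental cycles are listed in the fixed order cs.\<close>

definition A_T :: "'a set \<Rightarrow> 'a set set \<Rightarrow> 'a set set \<Rightarrow> 'a \<Rightarrow> 'a set list \<Rightarrow> real list
                    \<Rightarrow> ('a \<Rightarrow> 'a \<Rightarrow> complex) set" where
  "A_T V E T rt cs r = {\<phi> \<in> gain_graphs V E.
     \<forall>j < length cs. walk_gain \<phi> (fundamental_cycle V T rt (cs ! j)) = exp (\<i> * of_real (r ! j))}"

definition I_pow :: "nat \<Rightarrow> real list set" where
  "I_pow k = {r. length r = k \<and> (\<forall>x\<in>set r. 0 \<le> x \<and> x < 2 * pi)}"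

end

theory Submission
  imports Defs "HOL-Analysis.Complex_Transcendental"
begin

text \<open>A gain graph lies in \<open>\<A>_T(r)\<close> exactly when \<open>r\<^sub>j\<close> is the argument in \<open>[0, 2\<pi>)\<close> of the gain
  of the \<open>j\<close>-th fundamental cycle, so the sets \<open>\<A>_T(r)\<close> are disjoint and cover \<open>\<T>_G\<close>. Every \<open>r\<close>
  is realised: a fundamental cycle is a tree path closed by its own non-tree arc, so gain 1 on the
  tree edges and \<open>exp (i c\<^sub>j)\<close> on the \<open>j\<close>-th non-tree arc does it. There are \<open>m - n + 1\<close> cycles because a
  spanning tree has \<open>n - 1\<close> edges, which follows by matching every non-root vertex with the edge to
  its parent.\<close>

lemma is_path_singleton [simp]: "is_path V F [x] \<longleftrightarrow> x \<in> V"
  by (auto simp: is_path_def)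

lemma is_path_Cons:
  assumes "p \<noteq> []"
  shows "is_path V F (x # p) \<longleftrightarrow> x \<in> V \<and> x \<notin> set p \<and> {x, hd p} \<in> F \<and> is_path V F p"
proof
  assume path: "is_path V F (x # p)"
  have "{x, hd p} \<in> F" using path assms unfolding is_path_def
    by (metis Suc_less_eq hd_conv_nth length_Cons length_greater_0_conv nth_Cons_0 nth_Cons_Suc)
  moreover have "is_path V F p" using path assms unfolding is_path_def
    by (metis Suc_less_eq distinct.simps(2) length_Cons list.set_intros(2) nth_Cons_Suc subset_code(1))
  ultimately show "x \<in> V \<and> x \<notin> set p \<and> {x, hd p} \<in> F \<and> is_path V F p"
    using path by (auto simp: is_path_def)
next
  assume h: "x \<in> V \<and> x \<notin> set p \<and> {x, hd p} \<in> F \<and> is_path V F p"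
  show "is_path V F (x # p)" unfolding is_path_def
  proof (intro conjI allI impI)
    fix i assume i: "Suc i < length (x # p)"
    show "{(x # p) ! i, (x # p) ! Suc i} \<in> F"
    proof (cases i)
      case 0 then show ?thesis using h assms by (simp add: hd_conv_nth)
    next
      case (Suc j) then show ?thesis using h i by (auto simp: is_path_def)
    qed
  qed (use h in \<open>auto simp: is_path_def\<close>)
qed

lemma is_path_appendD1: "is_path V F (xs @ ys) \<Longrightarrow> xs \<noteq> [] \<Longrightarrow> is_path V F xs"
  unfolding is_path_def
  by (smt (verit, ccfv_threshold) Suc_lessD Un_subset_iff distinct_append length_append nth_append
      set_append trans_less_add1)

lemma is_path_snoc:
  assumes "is_path V F p" "b \<in> V" "b \<notin> set p" "{last p, b} \<in> F"
  shows "is_path V F (p @ [b])"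
  using assms
proof (induction p)
  case (Cons a p)
  then show ?case by (cases "p = []") (auto simp: is_path_Cons)
qed (simp add: is_path_def)

lemma is_path_append_edge: "is_path V F (xs @ y # ys) \<Longrightarrow> xs \<noteq> [] \<Longrightarrow> {last xs, y} \<in> F"
proof (induction xs)
  case (Cons a xs)
  then show ?case by (cases "xs = []") (auto simp: is_path_Cons)
qed simp

lemma acyclic_path_unique:
  assumes acyclic: "\<nexists>c. is_cycle V F c"
  shows "is_path V F q \<Longrightarrow> is_path V F p \<Longrightarrow> hd p = hd q \<Longrightarrow> last p = last q \<Longrightarrow> p = q"
proof (induction q arbitrary: p)
  case Nil
  then show ?case by (simp add: is_path_def)
next
  case (Cons x q')
  obtain p' where p: "p = x # p'"
    using Cons.prems by (cases p) (auto simp: is_path_def)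
  show ?case
  proof (cases "q' = []")
    case True
    then have "hd p = last p" using Cons.prems by simp
    with p Cons.prems(2) have "p' = []"
      by (cases p' rule: rev_cases) (auto simp: is_path_def)
    then show ?thesis using p True by simp
  next
    case q'_ne: False
    then obtain b q'' where q': "q' = b # q''" by (cases q') auto
    have q: "{x, b} \<in> F" "x \<notin> set q'" "is_path V F q'"
      using Cons.prems(1) q' by (auto simp: is_path_Cons)
    have "p' \<noteq> []"
    proof
      assume "p' = []"
      then have "last q' = x" using Cons.prems p q'_ne by simp
      then show False using q(2) q'_ne by (metis last_in_set)
    qed
    then have p': "x \<notin> set p'" "is_path V F p'"
      using Cons.prems(2) p by (auto simp: is_path_Cons)
    show ?thesis
    proof (cases "b \<in> set p")
      case False
      have "b \<in> V" using q(3) q' by (simp add: is_path_def)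
      then have "is_path V F (b # p)"
        using Cons.prems(2) False q(1) p by (simp add: is_path_Cons insert_commute)
      moreover have "last (b # p) = last q'" using Cons.prems(4) p q'_ne by simp
      ultimately have "b # p = q'" using Cons.IH[OF q(3)] q' by simp
      then show ?thesis using q(2) p by auto
    next
      case True
      then obtain u w where uw: "p' = u @ b # w"
        using q(2) p q' by (auto dest: split_list)
      show ?thesis
      proof (cases "u = []")
        case True
        then show ?thesis using Cons.IH[OF q(3) p'(2)] Cons.prems p uw q' by simp
      next
        case False
        have "is_path V F (x # u @ [b])"
          using Cons.prems(2) p uw is_path_appendD1[of V F "x # u @ [b]" w] by simp
        then have "is_cycle V F (x # u @ [b])"
          using False q(1) by (auto simp: is_cycle_def insert_commute Suc_le_eq)
        then show ?thesis using acyclic by blast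
      qed
    qed
  qed
qed

locale rooted_tree =
  fixes V :: "'a set" and T :: "'a set set" and rt :: 'a
  assumes finite_V: "finite V"
    and edge_T: "\<And>e. e \<in> T \<Longrightarrow> e \<subseteq> V \<and> card e = 2"
    and connected: "connected_graph V T"
    and acyclic: "\<nexists>c. is_cycle V T c"
    and root_in_V: "rt \<in> V"
begin

lemma tree_path:
  assumes "x \<in> V" "y \<in> V"
  shows "is_path V T (tree_path V T x y) \<and> hd (tree_path V T x y) = x \<and> last (tree_path V T x y) = y"
proof -
  obtain p where p: "is_path V T p" "hd p = x" "last p = y"
    using connected assms unfolding connected_graph_def by blast
  show ?thesis unfolding tree_path_def
    by (rule theI[of _ p]) (use p acyclic_path_unique[OF acyclic] in auto)
qed

lemma tree_path_eq:
  assumes "is_path V T p"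
  shows "tree_path V T (hd p) (last p) = p"
proof -
  have "hd p \<in> V" "last p \<in> V" using assms by (auto simp: is_path_def)
  from tree_path[OF this] show ?thesis using acyclic_path_unique[OF acyclic] assms by metis
qed

definition parent :: "'a \<Rightarrow> 'a" where
  "parent v = last (butlast (tree_path V T rt v))"

lemma tree_path_root_snoc:
  assumes "{a, b} \<in> T" "b \<notin> set (tree_path V T rt a)"
  shows "tree_path V T rt b = tree_path V T rt a @ [b]"
proof -
  have ab: "a \<in> V" "b \<in> V" using edge_T[OF assms(1)] by auto
  let ?p = "tree_path V T rt a"
  have p: "is_path V T ?p" "hd ?p = rt" "last ?p = a" "?p \<noteq> []"
    using tree_path[OF root_in_V ab(1)] by (auto simp: is_path_def)
  then have "is_path V T (?p @ [b])" using is_path_snoc[OF p(1) ab(2) assms(2)] assms(1) by simp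
  from tree_path_eq[OF this] show ?thesis using p by simp
qed

lemma tree_path_root_parent:
  assumes "v \<in> V" "v \<noteq> rt"
  shows "tree_path V T rt v = tree_path V T rt (parent v) @ [v] \<and> {parent v, v} \<in> T"
proof -
  let ?p = "tree_path V T rt v"
  have p: "is_path V T ?p" "hd ?p = rt" "last ?p = v"
    using tree_path[OF root_in_V assms(1)] by auto
  obtain u where u: "?p = u @ [v]" "u \<noteq> []"
    using p assms(2) by (cases ?p rule: rev_cases) (auto simp: is_path_def, force)
  have "is_path V T u" using is_path_appendD1 p(1) u by metis
  moreover have "hd u = rt" using p(2) u by simp
  ultimately have "tree_path V T rt (parent v) = u"
    using tree_path_eq[of u] u by (simp add: parent_def)
  moreover have "{parent v, v} \<in> T"
    using is_path_append_edge[of V T u v "[]"] p(1) u by (simp add: parent_def)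
  ultimately show ?thesis using u by simp
qed

lemma parent_of_tree_edge:
  assumes "{a, b} \<in> T" "b \<notin> set (tree_path V T rt a)"
  shows "b \<in> V - {rt} \<and> parent b = a"
proof -
  have "a \<in> V" "b \<in> V" using edge_T[OF assms(1)] by auto
  then have "hd (tree_path V T rt a) = rt" "last (tree_path V T rt a) = a" "tree_path V T rt a \<noteq> []"
    using tree_path[OF root_in_V] by (auto simp: is_path_def)
  then show ?thesis
    using tree_path_root_snoc[OF assms] assms(2) \<open>b \<in> V\<close>
    by (auto simp: parent_def dest: hd_in_set)
qed

text \<open>If \<open>b\<close> lies on the root path of \<open>a\<close>, the root path of \<open>b\<close> is a prefix of it; if \<open>a\<close> also lay
  on that prefix, the root path of \<open>a\<close> would visit \<open>a\<close> twice.\<close>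

lemma tree_edge_off_root_path:
  assumes "{a, b} \<in> T"
  shows "b \<notin> set (tree_path V T rt a) \<or> a \<notin> set (tree_path V T rt b)"
proof (rule ccontr)
  assume "\<not> ?thesis"
  then have b: "b \<in> set (tree_path V T rt a)" and a: "a \<in> set (tree_path V T rt b)" by auto
  have "a \<in> V" "b \<in> V" "a \<noteq> b" using edge_T[OF assms] by (auto simp: card_2_iff)
  let ?p = "tree_path V T rt a"
  have p: "is_path V T ?p" "hd ?p = rt" "last ?p = a"
    using tree_path[OF root_in_V \<open>a \<in> V\<close>] by auto
  obtain xs ys where split: "?p = xs @ b # ys" using b by (meson split_list)
  have "is_path V T (xs @ [b])" using is_path_appendD1[of V T "xs @ [b]" ys] p(1) split by simp
  moreover have "hd (xs @ [b]) = rt" using p(2) split by (cases xs) auto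
  ultimately have "tree_path V T rt b = xs @ [b]" using tree_path_eq by fastforce
  then have "a \<in> set xs" using a \<open>a \<noteq> b\<close> by auto
  moreover have "a \<in> set (b # ys)" using p(3) split by (metis last_appendR last_in_set list.distinct(1))
  ultimately show False using p(1) split by (auto simp: is_path_def)
qed

lemma card_tree_edges: "card T = card V - 1"
proof -
  let ?edge = "\<lambda>v. {parent v, v}"
  have "inj_on ?edge (V - {rt})"
  proof (rule inj_onI)
    fix v w assume v: "v \<in> V - {rt}" and w: "w \<in> V - {rt}" and eq: "?edge v = ?edge w"
    show "v = w"
    proof (rule ccontr)
      assume "v \<noteq> w"
      then have "v = parent w" "w = parent v" using eq by (auto simp: doubleton_eq_iff)
      then have "length (tree_path V T rt v) < length (tree_path V T rt w)"
        "length (tree_path V T rt w) < length (tree_path V T rt v)"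
        using tree_path_root_parent v w by (metis DiffE insertI1 length_append_singleton lessI)+
      then show False by simp
    qed
  qed
  moreover have "?edge ` (V - {rt}) = T"
  proof
    show "?edge ` (V - {rt}) \<subseteq> T" using tree_path_root_parent by auto
    show "T \<subseteq> ?edge ` (V - {rt})"
    proof
      fix e assume e: "e \<in> T"
      then obtain a b where ab: "e = {a, b}" using edge_T by (meson card_2_iff)
      with e consider "b \<notin> set (tree_path V T rt a)" | "a \<notin> set (tree_path V T rt b)"
        using tree_edge_off_root_path by blast
      then show "e \<in> ?edge ` (V - {rt})"
      proof cases
        case 1
        then show ?thesis using parent_of_tree_edge[of a b] e ab by force
      next
        case 2
        then show ?thesis using parent_of_tree_edge[of b a] e ab by (force simp: insert_commute)
      qed
    qed
  qed
  ultimately have "card T = card (V - {rt})" by (metis card_image)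
  then show ?thesis using root_in_V finite_V by simp
qed

end

lemma rooted_tree_if_spanning_tree:
  assumes "simple_graph V E" "spanning_tree V E T" "rt \<in> V"
  shows "rooted_tree V T rt"
  using assms by unfold_locales (auto simp: simple_graph_def spanning_tree_def)

lemma card_non_tree_edges:
  assumes "simple_graph V E" "spanning_tree V E T"
  shows "card (E - T) = card E + 1 - card V"
proof -
  have "V \<noteq> {}" using assms(2) by (simp add: spanning_tree_def connected_graph_def)
  then obtain rt where "rt \<in> V" by blast
  then interpret rooted_tree V T rt by (rule rooted_tree_if_spanning_tree[OF assms])
  have "E \<subseteq> Pow V" using assms(1) by (auto simp: simple_graph_def)
  then have "finite E" using finite_V by (simp add: finite_subset)
  moreover have "T \<subseteq> E" using assms(2) by (simp add: spanning_tree_def)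
  ultimately have "card (E - T) = card E - card T" "card T \<le> card E"
    by (simp_all add: card_Diff_subset finite_subset card_mono)
  moreover have "card V \<noteq> 0" using \<open>rt \<in> V\<close> finite_V by auto
  ultimately show ?thesis using card_tree_edges by linarith
qed

lemma gain_graphs_norm: "\<phi> \<in> gain_graphs V E \<Longrightarrow> cmod (\<phi> u v) = 1"
  by (cases "{u, v} \<in> E") (auto simp: gain_graphs_def)

lemma walk_gain_norm: "\<phi> \<in> gain_graphs V E \<Longrightarrow> cmod (walk_gain \<phi> p) = 1"
  by (simp add: walk_gain_def prod_norm[symmetric] gain_graphs_norm)

lemma walk_gain_closing_arc:
  assumes "p \<noteq> []" "\<And>i. Suc i < length p \<Longrightarrow> \<phi> (p ! i) (p ! Suc i) = 1"
  shows "walk_gain \<phi> p = \<phi> (last p) (hd p)"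
proof -
  obtain m where m: "length p = Suc m" using assms(1) by (cases p) auto
  have "walk_gain \<phi> p = (\<Prod>i<m. \<phi> (p ! i) (p ! Suc i)) * \<phi> (p ! m) (p ! 0)"
    by (simp add: walk_gain_def m)
  also have "\<dots> = \<phi> (last p) (hd p)"
    using assms m by (simp add: last_conv_nth hd_conv_nth)
  finally show ?thesis .
qed

definition arc_gain :: "'a set set \<Rightarrow> ('a set \<Rightarrow> 'a \<times> 'a) \<Rightarrow> ('a set \<Rightarrow> complex) \<Rightarrow> 'a \<Rightarrow> 'a \<Rightarrow> complex"
  where "arc_gain F orient z u v =
    (if {u, v} \<in> F then if orient {u, v} = (u, v) then z {u, v} else inverse (z {u, v}) else 1)"

lemma arc_gain_in_gain_graphs:
  assumes "F \<subseteq> E" and orient: "\<And>e. e \<in> F \<Longrightarrow> \<exists>u v. orient e = (u, v) \<and> e = {u, v} \<and> u \<noteq> v"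
    and "\<And>e. cmod (z e) = 1"
  shows "arc_gain F orient z \<in> gain_graphs V E"
  unfolding gain_graphs_def
proof (intro CollectI conjI allI impI)
  fix u v
  show "cmod (arc_gain F orient z u v) = 1" using assms(3) by (simp add: arc_gain_def norm_inverse)
  show "arc_gain F orient z v u = inverse (arc_gain F orient z u v)"
  proof (cases "{u, v} \<in> F")
    case True
    then have "orient {u, v} = (u, v) \<or> orient {u, v} = (v, u)" "u \<noteq> v"
      using orient[OF True] by (auto simp: doubleton_eq_iff)
    then show ?thesis by (auto simp: arc_gain_def insert_commute)
  qed (simp add: arc_gain_def insert_commute)
  show "{u, v} \<notin> E \<Longrightarrow> arc_gain F orient z u v = 1" using assms(1) by (auto simp: arc_gain_def)
qed

lemma arc_gain_arc: "e \<in> F \<Longrightarrow> orient e = (u, v) \<Longrightarrow> e = {u, v} \<Longrightarrow> arc_gain F orient z u v = z e"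
  by (simp add: arc_gain_def)

definition tree_ends :: "'a set \<Rightarrow> 'a set set \<Rightarrow> 'a \<Rightarrow> 'a set \<Rightarrow> 'a \<times> 'a" where
  "tree_ends V T rt e = (SOME (s, t). e = {s, t} \<and> tree_le V T rt s t)"

lemma fundamental_cycle_tree_ends:
  "tree_ends V T rt e = (s, t) \<Longrightarrow> fundamental_cycle V T rt e = tree_path V T s t"
  by (simp add: fundamental_cycle_def tree_ends_def)

lemma tree_endsE:
  assumes "simple_graph V E" "normal_spanning_tree V E T rt" "e \<in> E"
  obtains s t where "tree_ends V T rt e = (s, t)" "e = {s, t}" "s \<noteq> t" "tree_le V T rt s t"
proof -
  obtain a b where "e = {a, b}" "a \<noteq> b"
    using assms(1,3) by (auto simp: simple_graph_def card_2_iff)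
  moreover have "tree_le V T rt a b \<or> tree_le V T rt b a"
    using assms(2,3) \<open>e = {a, b}\<close> by (simp add: normal_spanning_tree_def)
  ultimately have "\<exists>x. (\<lambda>(s, t). e = {s, t} \<and> tree_le V T rt s t) x"
    by (auto simp: insert_commute)
  from someI_ex[OF this] obtain s t where "tree_ends V T rt e = (s, t)" "e = {s, t}" "tree_le V T rt s t"
    unfolding tree_ends_def by (auto split: prod.splits)
  moreover have "s \<noteq> t" using \<open>e = {s, t}\<close> \<open>e = {a, b}\<close> \<open>a \<noteq> b\<close> by auto
  ultimately show ?thesis using that by blast
qed

lemma fundamental_cycle_gains_arbitrary:
  assumes "simple_graph V E" "normal_spanning_tree V E T rt" "\<And>e. cmod (c e) = 1"
  shows "\<exists>\<phi> \<in> gain_graphs V E. \<forall>e \<in> E - T. walk_gain \<phi> (fundamental_cycle V T rt e) = c e"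
proof -
  have "spanning_tree V E T" "rt \<in> V"
    using assms(2) by (simp_all add: normal_spanning_tree_def)
  then interpret rooted_tree V T rt by (rule rooted_tree_if_spanning_tree[OF assms(1)])
  let ?orient = "\<lambda>e. prod.swap (tree_ends V T rt e)"
  let ?\<phi> = "arc_gain (E - T) ?orient c"
  have "?\<phi> \<in> gain_graphs V E"
  proof (rule arc_gain_in_gain_graphs[OF Diff_subset _ assms(3)])
    fix e assume "e \<in> E - T"
    then obtain s t where "tree_ends V T rt e = (s, t)" "e = {s, t}" "s \<noteq> t" "tree_le V T rt s t"
      by (rule tree_endsE[OF assms(1,2) DiffD1])
    then show "\<exists>u v. ?orient e = (u, v) \<and> e = {u, v} \<and> u \<noteq> v"
      by (intro exI[of _ t] exI[of _ s]) (simp add: insert_commute)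
  qed
  moreover have "walk_gain ?\<phi> (fundamental_cycle V T rt e) = c e" if e: "e \<in> E - T" for e
  proof -
    obtain s t where st: "tree_ends V T rt e = (s, t)" "e = {s, t}" "s \<noteq> t" "tree_le V T rt s t"
      using e by (rule tree_endsE[OF assms(1,2) DiffD1])
    let ?p = "tree_path V T s t"
    have "s \<in> V" "t \<in> V" using st(4) by (simp_all add: tree_le_def)
    then have p: "is_path V T ?p" "hd ?p = s" "last ?p = t" using tree_path by blast+
    have tree_arcs: "?\<phi> (?p ! i) (?p ! Suc i) = 1" if "Suc i < length ?p" for i
      using p(1) that by (simp add: is_path_def arc_gain_def)
    have "?p \<noteq> []" using p(1) by (simp add: is_path_def)
    then have "walk_gain ?\<phi> ?p = ?\<phi> (last ?p) (hd ?p)"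
      using tree_arcs by (rule walk_gain_closing_arc)
    also have "\<dots> = ?\<phi> t s" using p(2,3) by simp
    also have "\<dots> = c e" using e st by (simp add: arc_gain_arc insert_commute)
    finally show ?thesis using fundamental_cycle_tree_ends[OF st(1)] by simp
  qed
  ultimately show ?thesis by blast
qed

lemma A_T_of_cycle_args:
  fixes T :: "'a set set" and rt :: 'a and cs :: "'a set list"
  assumes "\<phi> \<in> gain_graphs V E"
  defines "r \<equiv> map (\<lambda>e. Arg2pi (walk_gain \<phi> (fundamental_cycle V T rt e))) cs"
  shows "r \<in> I_pow (length cs)" and "\<phi> \<in> A_T V E T rt cs r"
proof -
  show "r \<in> I_pow (length cs)" using Arg2pi by (auto simp: r_def I_pow_def)
  show "\<phi> \<in> A_T V E T rt cs r"
    using assms(1) walk_gain_norm[OF assms(1)] by (simp add: A_T_def r_def complex_norm_eq_1_exp)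
qed

lemma A_T_disjoint:
  assumes "r \<in> I_pow (length cs)" "r' \<in> I_pow (length cs)" "r \<noteq> r'"
  shows "A_T V E T rt cs r \<inter> A_T V E T rt cs r' = {}"
proof (rule ccontr)
  assume "A_T V E T rt cs r \<inter> A_T V E T rt cs r' \<noteq> {}"
  then have eq: "exp (\<i> * of_real (r ! j)) = exp (\<i> * of_real (r' ! j))" if "j < length cs" for j
    using that by (auto simp: A_T_def)
  have "r ! j = r' ! j" if "j < length cs" for j
  proof -
    have "r ! j \<in> {0..<2 * pi}" "r' ! j \<in> {0..<2 * pi}"
      using assms(1,2) that by (auto simp: I_pow_def)
    then have "r ! j = Arg2pi (exp (\<i> * of_real (r ! j)))" "r' ! j = Arg2pi (exp (\<i> * of_real (r' ! j)))"
      by (simp_all add: Arg2pi_exp)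
    then show ?thesis using eq[OF that] by simp
  qed
  then have "r = r'" using assms(1,2) by (simp add: I_pow_def nth_equalityI)
  then show False using assms(3) by simp
qed

lemma A_T_nonempty:
  assumes "simple_graph V E" "normal_spanning_tree V E T rt"
    and "distinct cs" "set cs \<subseteq> E - T" "length r = length cs"
  shows "A_T V E T rt cs r \<noteq> {}"
proof -
  let ?c = "\<lambda>e. exp (\<i> * of_real (the (map_of (zip cs r) e)))"
  obtain \<phi> where "\<phi> \<in> gain_graphs V E" and \<phi>: "\<forall>e \<in> E - T. walk_gain \<phi> (fundamental_cycle V T rt e) = ?c e"
    using fundamental_cycle_gains_arbitrary[OF assms(1,2), of ?c] by auto
  moreover have "walk_gain \<phi> (fundamental_cycle V T rt (cs ! j)) = exp (\<i> * of_real (r ! j))"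
    if "j < length cs" for j
    using \<phi> that assms(3-5) map_of_zip_nth[of cs r j] by (simp add: subset_iff)
  ultimately show ?thesis unfolding A_T_def by blast
qed

theorem theorem3p3:
  fixes V :: "'a set" and E T :: "'a set set" and rt :: 'a and cs :: "'a set list"
  assumes "simple_graph V E"
    and "connected_graph V E"
    and "normal_spanning_tree V E T rt"
    and "distinct cs" and "set cs = E - T"
  shows "gain_graphs V E = (\<Union>r \<in> I_pow (card E + 1 - card V). A_T V E T rt cs r)
    \<and> (\<forall>r \<in> I_pow (card E + 1 - card V). A_T V E T rt cs r \<noteq> {})
    \<and> (\<forall>r \<in> I_pow (card E + 1 - card V). \<forall>r' \<in> I_pow (card E + 1 - card V).
          r \<noteq> r' \<longrightarrow> A_T V E T rt cs r \<inter> A_T V E T rt cs r' = {})"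
proof -
  have "length cs = card (E - T)" using distinct_card[OF assms(4)] assms(5) by simp
  also have "\<dots> = card E + 1 - card V"
    using card_non_tree_edges[OF assms(1)] assms(3) by (simp add: normal_spanning_tree_def)
  finally have length_cs: "length cs = card E + 1 - card V" .
  have "gain_graphs V E \<subseteq> (\<Union>r \<in> I_pow (length cs). A_T V E T rt cs r)"
  proof
    fix \<phi> assume "\<phi> \<in> gain_graphs V E"
    from A_T_of_cycle_args[OF this] show "\<phi> \<in> (\<Union>r \<in> I_pow (length cs). A_T V E T rt cs r)"
      by (rule UN_I)
  qed
  moreover have "(\<Union>r \<in> I_pow (length cs). A_T V E T rt cs r) \<subseteq> gain_graphs V E"
    by (auto simp: A_T_def)
  moreover have "\<forall>r \<in> I_pow (length cs). A_T V E T rt cs r \<noteq> {}"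
    using A_T_nonempty[OF assms(1,3,4)] assms(5) by (simp add: I_pow_def)
  moreover have "\<forall>r \<in> I_pow (length cs). \<forall>r' \<in> I_pow (length cs).
      r \<noteq> r' \<longrightarrow> A_T V E T rt cs r \<inter> A_T V E T rt cs r' = {}"
    by (simp add: A_T_disjoint)
  ultimately show ?thesis unfolding length_cs[symmetric] by (intro conjI equalityI)
qed

end
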